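(* Let $\theta$ be a random variable with a continuous distribution, let $u(q,\theta)$ be a utility function, monotone increasing in $q$, with $\partial^2u(q,\theta)/\partial q^2=-1/d$ for all $(q,\theta)$, where $d>0$, and let the penalty be a quadratic function $\phi$ with $\phi(0)=\phi'(0)=0$, symmetric, and $\phi''(x)=1/\lambda$ for all $x$, where $\lambda>0$. Let $\pi_0>0$, $\pi_2>0$, $p\in(0,1)$. Define $q^a(\theta)=\arg\min_q\{\pi_0 q-u(q,\theta)\}$, $q^b(f,\theta)=\arg\min_q\{\pi_0 q-u(q,\theta)+\phi(f-q)\}$, $q^c(\theta)=\arg\min_q\{\pi_0 q-u(q,\theta)-\pi_2(f-q)\}$, $$H(f)=p\,\mathbb{E}_\theta[\pi_0 q^c-u(q^c,\theta)-\pi_2(f-q^c)]+(1-p)\,\mathbb{E}_\theta[\pi_0 q^b-u(q^b,\theta)+\phi(f-q^b)],$$ and let $f^*$ be the minimizer of $H$. Then the expected inflation of the baseline report is $$\mathbb{E}_\theta\,\delta f^*(p)=f^*-\mathbb{E}_\theta q^a(\theta)=(d+\lambda)\frac{p\,\pi_2}{1-p}.$$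
   Context: A consumer in a demand response program self-reports baseline $f$; with probability $p$ it is called and paid $\pi_2$ per unit of reduction $f-q$, otherwise it pays penalty $\phi(f-q)$. $\pi_0$ is the retail price; $q^a(\theta)$ is the consumption when not participating (the true baseline), and $\delta f^*(\theta)=f^*-q^a(\theta)$ is the baseline inflation. *)

theory Defs
  imports "HOL-Probability.Probability"
begin

definition qa :: "real \<Rightarrow> (real \<Rightarrow> real \<Rightarrow> real) \<Rightarrow> real \<Rightarrow> real" where
  "qa \<pi>0 u \<theta> = (ARG_MIN (\<lambda>q. \<pi>0 * q - u q \<theta>) q. True)"

definition qb :: "real \<Rightarrow> (real \<Rightarrow> real \<Rightarrow> real) \<Rightarrow> (real \<Rightarrow> real) \<Rightarrow> real \<Rightarrow> real \<Rightarrow> real" where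
  "qb \<pi>0 u \<phi> f \<theta> = (ARG_MIN (\<lambda>q. \<pi>0 * q - u q \<theta> + \<phi> (f - q)) q. True)"

definition qc :: "real \<Rightarrow> real \<Rightarrow> (real \<Rightarrow> real \<Rightarrow> real) \<Rightarrow> real \<Rightarrow> real \<Rightarrow> real" where
  "qc \<pi>0 \<pi>2 u f \<theta> = (ARG_MIN (\<lambda>q. \<pi>0 * q - u q \<theta> - \<pi>2 * (f - q)) q. True)"

definition H :: "real measure \<Rightarrow> real \<Rightarrow> real \<Rightarrow> real \<Rightarrow> (real \<Rightarrow> real \<Rightarrow> real)
    \<Rightarrow> (real \<Rightarrow> real) \<Rightarrow> real \<Rightarrow> real" where
  "H M p \<pi>0 \<pi>2 u \<phi> f =
     p * (\<integral>\<theta>. (let q = qc \<pi>0 \<pi>2 u f \<theta> in \<pi>0 * q - u q \<theta> - \<pi>2 * (f - q)) \<partial>M)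
   + (1 - p) * (\<integral>\<theta>. (let q = qb \<pi>0 u \<phi> f \<theta> in \<pi>0 * q - u q \<theta> + \<phi> (f - q)) \<partial>M)"

end

theory Submission
  imports Defs
begin

(* Constant second derivatives make u(q, theta) = u(0, theta) + u'(0, theta) q - q^2/(2d) and
   phi(x) = x^2/(2 lam), so every consumption rule is the vertex of an explicit parabola and the
   optimal costs are explicit.  Averaging over theta turns H into a parabola in f with leading
   coefficient (1 - p)/(2(d + lam)) and linear coefficient -p pi2 - (1 - p) E[q^a]/(d + lam);
   its vertex is E[q^a] + (d + lam) p pi2/(1 - p). *)

lemma quadratic_vertex_decomposition:
  fixes F :: "real \<Rightarrow> real"
  assumes "\<alpha> \<noteq> 0" and F: "\<And>y. F y = \<alpha> * y\<^sup>2 + \<beta> * y + \<gamma>"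
  shows "F y = F (- \<beta> / (2 * \<alpha>)) + \<alpha> * (y + \<beta> / (2 * \<alpha>))\<^sup>2"
  using assms(1) by (simp add: F field_simps power2_eq_square)

lemma quadratic_minimizer_unique:
  fixes F :: "real \<Rightarrow> real"
  assumes "\<alpha> > 0" and F: "\<And>y. F y = \<alpha> * y\<^sup>2 + \<beta> * y + \<gamma>"
    and minimal: "\<And>y. F x \<le> F y"
  shows "x = - \<beta> / (2 * \<alpha>)"
proof -
  have "\<alpha> * (x + \<beta> / (2 * \<alpha>))\<^sup>2 \<le> 0"
    using minimal[of "- \<beta> / (2 * \<alpha>)"] quadratic_vertex_decomposition[of \<alpha> F \<beta> \<gamma> x]
      \<open>\<alpha> > 0\<close> F
    by simp
  then show ?thesis using \<open>\<alpha> > 0\<close> by (simp add: mult_le_0_iff eq_neg_iff_add_eq_0)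
qed

lemma arg_min_quadratic:
  fixes F :: "real \<Rightarrow> real"
  assumes "\<alpha> > 0" and F: "\<And>y. F y = \<alpha> * y\<^sup>2 + \<beta> * y + \<gamma>"
  shows "(ARG_MIN F q. True) = - \<beta> / (2 * \<alpha>)"
proof (rule quadratic_minimizer_unique[OF assms])
  have vertex_min: "F (- \<beta> / (2 * \<alpha>)) \<le> F y" for y
    using quadratic_vertex_decomposition[of \<alpha> F \<beta> \<gamma> y] \<open>\<alpha> > 0\<close> F by simp
  fix y
  have "F (ARG_MIN F q. True) = F (- \<beta> / (2 * \<alpha>))"
    by (rule arg_min_equality) (rule TrueI, rule vertex_min)
  then show "F (ARG_MIN F q. True) \<le> F y" using vertex_min by simp
qed

lemma quadratic_of_constant_second_derivative:
  fixes f f' :: "real \<Rightarrow> real"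
  assumes f: "\<And>x. (f has_real_derivative f' x) (at x)"
    and f': "\<And>x. (f' has_real_derivative c) (at x)"
  shows "f x = f 0 + f' 0 * x + c / 2 * x\<^sup>2"
proof -
  have "\<forall>z. ((\<lambda>y. f' y - c * y) has_real_derivative 0) (at z)"
    using DERIV_diff[OF f' DERIV_cmult_Id[of c]] by simp
  then have f'_const: "f' y - c * y = f' 0 - c * 0" for y
    by (rule DERIV_isconst_all)
  have f'_linear: "f' y = f' 0 + c * y" for y
    using f'_const[of y] by linarith
  have "\<forall>z. ((\<lambda>y. f y - (f' 0 * y + c / 2 * y\<^sup>2)) has_real_derivative 0) (at z)"
  proof
    fix z
    have "((\<lambda>y. f' 0 * y + c / 2 * y\<^sup>2) has_real_derivative f' 0 + c * z) (at z)"
      by (auto intro!: derivative_eq_intros)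
    from DERIV_diff[OF f this]
    show "((\<lambda>y. f y - (f' 0 * y + c / 2 * y\<^sup>2)) has_real_derivative 0) (at z)"
      using f'_linear[of z] by simp
  qed
  then have "f x - (f' 0 * x + c / 2 * x\<^sup>2) = f 0 - (f' 0 * 0 + c / 2 * 0\<^sup>2)"
    by (rule DERIV_isconst_all)
  then show ?thesis by simp
qed

lemma qa_quadratic:
  assumes "d > 0" and u: "\<And>q \<theta>. u q \<theta> = u0 \<theta> + a \<theta> * q - q\<^sup>2 / (2 * d)"
  shows "qa \<pi>0 u \<theta> = d * (a \<theta> - \<pi>0)"
proof -
  have "(ARG_MIN (\<lambda>q. \<pi>0 * q - u q \<theta>) q. True) = - (\<pi>0 - a \<theta>) / (2 * (1 / (2 * d)))"
    by (rule arg_min_quadratic[where \<gamma> = "- u0 \<theta>"])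
      (use \<open>d > 0\<close> in \<open>simp_all add: u algebra_simps\<close>)
  then show ?thesis using \<open>d > 0\<close> by (simp add: qa_def algebra_simps)
qed

lemma qc_quadratic:
  assumes "d > 0" and u: "\<And>q \<theta>. u q \<theta> = u0 \<theta> + a \<theta> * q - q\<^sup>2 / (2 * d)"
  shows "qc \<pi>0 \<pi>2 u f \<theta> = d * (a \<theta> - \<pi>0 - \<pi>2)"
proof -
  have "(ARG_MIN (\<lambda>q. \<pi>0 * q - u q \<theta> - \<pi>2 * (f - q)) q. True)
      = - (\<pi>0 + \<pi>2 - a \<theta>) / (2 * (1 / (2 * d)))"
    by (rule arg_min_quadratic[where \<gamma> = "- u0 \<theta> - \<pi>2 * f"])
      (use \<open>d > 0\<close> in \<open>simp_all add: u algebra_simps\<close>)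
  then show ?thesis using \<open>d > 0\<close> by (simp add: qc_def algebra_simps)
qed

lemma qb_quadratic:
  assumes "d > 0" and "lam > 0"
    and u: "\<And>q \<theta>. u q \<theta> = u0 \<theta> + a \<theta> * q - q\<^sup>2 / (2 * d)"
    and \<phi>: "\<And>x. \<phi> x = x\<^sup>2 / (2 * lam)"
  shows "qb \<pi>0 u \<phi> f \<theta> = d * (lam * (a \<theta> - \<pi>0) + f) / (d + lam)"
proof -
  have "(ARG_MIN (\<lambda>q. \<pi>0 * q - u q \<theta> + \<phi> (f - q)) q. True)
      = - (\<pi>0 - a \<theta> - f / lam) / (2 * ((d + lam) / (2 * d * lam)))"
    by (rule arg_min_quadratic[where \<gamma> = "f\<^sup>2 / (2 * lam) - u0 \<theta>"])
      (use assms(1,2) in \<open>simp_all add: u \<phi> field_simps power2_eq_square\<close>)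
  moreover have "d + lam \<noteq> 0" using assms(1,2) by simp
  ultimately show ?thesis
    using assms(1,2) by (simp add: qb_def divide_simps) (simp add: algebra_simps)
qed

lemma optimal_cost_called:
  assumes "d > 0" and u: "\<And>q \<theta>. u q \<theta> = u0 \<theta> + a \<theta> * q - q\<^sup>2 / (2 * d)"
  shows "(let q = qc \<pi>0 \<pi>2 u f \<theta> in \<pi>0 * q - u q \<theta> - \<pi>2 * (f - q))
    = - u0 \<theta> - d * (a \<theta> - (\<pi>0 + \<pi>2))\<^sup>2 / 2 - \<pi>2 * f"
  using assms(1) by (simp add: qc_quadratic[OF assms] u field_simps power2_eq_square)

lemma optimal_cost_not_called:
  assumes "d > 0" and "lam > 0"
    and u: "\<And>q \<theta>. u q \<theta> = u0 \<theta> + a \<theta> * q - q\<^sup>2 / (2 * d)"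
    and \<phi>: "\<And>x. \<phi> x = x\<^sup>2 / (2 * lam)"
  shows "(let q = qb \<pi>0 u \<phi> f \<theta> in \<pi>0 * q - u q \<theta> + \<phi> (f - q))
    = f\<^sup>2 / (2 * (d + lam)) - f / (d + lam) * (d * (a \<theta> - \<pi>0))
      + (- u0 \<theta> - d * lam * (a \<theta> - \<pi>0)\<^sup>2 / (2 * (d + lam)))"
proof -
  \<comment> \<open>Naming \<open>d + lam\<close> lets \<open>field_simps\<close> clear it as a single denominator.\<close>
  define s where "s = d + lam"
  have "s > 0" using assms(1,2) by (simp add: s_def)
  have q: "qb \<pi>0 u \<phi> f \<theta> = d * (lam * (a \<theta> - \<pi>0) + f) / s"
    by (simp add: qb_quadratic[OF assms] s_def)
  show ?thesis
    unfolding Let_def q u \<phi> s_def[symmetric] using \<open>s > 0\<close> assms(1,2)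
    by (simp add: field_simps power2_eq_square) (simp add: s_def algebra_simps)
qed

lemma (in finite_measure) integrable_power2_diff_const:
  fixes a :: "'a \<Rightarrow> real"
  assumes "integrable M a" and "integrable M (\<lambda>x. (a x)\<^sup>2)"
  shows "integrable M (\<lambda>x. (a x - c)\<^sup>2)"
  unfolding power2_diff using assms by auto

lemma H_eq_quadratic:
  assumes "prob_space M" and "d > 0" and "lam > 0"
    and u: "\<And>q \<theta>. u q \<theta> = u0 \<theta> + a \<theta> * q - q\<^sup>2 / (2 * d)"
    and \<phi>: "\<And>x. \<phi> x = x\<^sup>2 / (2 * lam)"
    and "integrable M u0" and "integrable M a" and "integrable M (\<lambda>\<theta>. (a \<theta>)\<^sup>2)"
  shows "\<exists>C. \<forall>f. H M p \<pi>0 \<pi>2 u \<phi> f = (1 - p) / (2 * (d + lam)) * f\<^sup>2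
      + (- (p * \<pi>2) - (1 - p) * (\<integral>\<theta>. d * (a \<theta> - \<pi>0) \<partial>M) / (d + lam)) * f + C"
proof -
  interpret prob_space M by fact
  define E1 where "E1 = (\<integral>\<theta>. - u0 \<theta> - d * (a \<theta> - (\<pi>0 + \<pi>2))\<^sup>2 / 2 \<partial>M)"
  define E2 where "E2 = (\<integral>\<theta>. - u0 \<theta> - d * lam * (a \<theta> - \<pi>0)\<^sup>2 / (2 * (d + lam)) \<partial>M)"
  define Q where "Q = (\<integral>\<theta>. d * (a \<theta> - \<pi>0) \<partial>M)"
  have integrable_sq: "integrable M (\<lambda>\<theta>. (a \<theta> - c)\<^sup>2)" for c
    using integrable_power2_diff_const assms(7,8) by blast
  have called: "(\<integral>\<theta>. (let q = qc \<pi>0 \<pi>2 u f \<theta> in \<pi>0 * q - u q \<theta> - \<pi>2 * (f - q)) \<partial>M)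
      = - \<pi>2 * f + E1" for f
    using assms(6) integrable_sq
    by (subst optimal_cost_called[OF assms(2) u]) (simp add: E1_def prob_space)
  have not_called: "(\<integral>\<theta>. (let q = qb \<pi>0 u \<phi> f \<theta> in \<pi>0 * q - u q \<theta> + \<phi> (f - q)) \<partial>M)
      = f\<^sup>2 / (2 * (d + lam)) - f * Q / (d + lam) + E2" for f
  proof -
    have "integrable M (\<lambda>\<theta>. - u0 \<theta> - d * lam * (a \<theta> - \<pi>0)\<^sup>2 / (2 * (d + lam)))"
      using assms(6) integrable_sq by auto
    moreover have "integrable M (\<lambda>\<theta>. d * (a \<theta> - \<pi>0))"
      using assms(7) by auto
    ultimately show ?thesis
      by (subst optimal_cost_not_called[OF assms(2,3) u \<phi>])
        (simp add: E2_def Q_def prob_space)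
  qed
  have "H M p \<pi>0 \<pi>2 u \<phi> f = (1 - p) / (2 * (d + lam)) * f\<^sup>2
      + (- (p * \<pi>2) - (1 - p) * Q / (d + lam)) * f + (p * E1 + (1 - p) * E2)" for f
    unfolding H_def called not_called by (simp add: field_simps)
  then show ?thesis unfolding Q_def by blast
qed

theorem theorem3:
  fixes M :: "real measure"
    and u u' :: "real \<Rightarrow> real \<Rightarrow> real"
    and \<phi> \<phi>' :: "real \<Rightarrow> real"
    and d lam \<pi>0 \<pi>2 p fstar :: real
  assumes "prob_space M"
    and "sets M = sets borel"
    and "\<forall>x. emeasure M {x} = 0"
    and "d > 0" and "lam > 0" and "\<pi>0 > 0" and "\<pi>2 > 0" and "0 < p" and "p < 1"
    and "\<forall>\<theta> q. ((\<lambda>q. u q \<theta>) has_real_derivative u' q \<theta>) (at q)"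
    and "\<forall>\<theta> q. ((\<lambda>q. u' q \<theta>) has_real_derivative (- 1 / d)) (at q)"
    and "\<forall>x. (\<phi> has_real_derivative \<phi>' x) (at x)"
    and "\<forall>x. (\<phi>' has_real_derivative (1 / lam)) (at x)"
    and "\<phi> 0 = 0" and "\<phi>' 0 = 0"
    and "\<forall>x. \<phi> (- x) = \<phi> x"
    and "integrable M (\<lambda>\<theta>. u 0 \<theta>)"
    and "integrable M (\<lambda>\<theta>. u' 0 \<theta>)"
    and "integrable M (\<lambda>\<theta>. (u' 0 \<theta>)\<^sup>2)"
    and "\<forall>f. H M p \<pi>0 \<pi>2 u \<phi> fstar \<le> H M p \<pi>0 \<pi>2 u \<phi> f"
  shows "fstar - (\<integral>\<theta>. qa \<pi>0 u \<theta> \<partial>M) = (d + lam) * (p * \<pi>2 / (1 - p))"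
proof -
  have u_quadratic: "u q \<theta> = u 0 \<theta> + u' 0 \<theta> * q - q\<^sup>2 / (2 * d)" for q \<theta>
    using quadratic_of_constant_second_derivative[of "\<lambda>q. u q \<theta>" "\<lambda>q. u' q \<theta>" "- 1 / d" q]
      assms(10,11) by simp
  have \<phi>_quadratic: "\<phi> x = x\<^sup>2 / (2 * lam)" for x
    using quadratic_of_constant_second_derivative[of \<phi> \<phi>' "1 / lam" x] assms(12-15) by simp
  define Q where "Q = (\<integral>\<theta>. d * (u' 0 \<theta> - \<pi>0) \<partial>M)"
  obtain C where H: "\<forall>f. H M p \<pi>0 \<pi>2 u \<phi> f = (1 - p) / (2 * (d + lam)) * f\<^sup>2
      + (- (p * \<pi>2) - (1 - p) * Q / (d + lam)) * f + C"
    using H_eq_quadratic[OF assms(1,4,5) u_quadratic \<phi>_quadratic assms(17-19)]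
    unfolding Q_def by blast
  define s where "s = d + lam"
  have "s > 0" "1 - p > 0" using assms(4,5,9) by (auto simp: s_def)
  have "fstar = - (- (p * \<pi>2) - (1 - p) * Q / s) / (2 * ((1 - p) / (2 * s)))"
    by (rule quadratic_minimizer_unique[OF _ spec[OF H[folded s_def]]])
      (use \<open>s > 0\<close> \<open>1 - p > 0\<close> assms(20) in auto)
  also have "\<dots> = Q + s * (p * \<pi>2 / (1 - p))"
    using \<open>s > 0\<close> \<open>1 - p > 0\<close> by (simp add: field_simps)
  finally have "fstar = Q + s * (p * \<pi>2 / (1 - p))" .
  moreover have "(\<integral>\<theta>. qa \<pi>0 u \<theta> \<partial>M) = Q"
    unfolding Q_def qa_quadratic[OF assms(4) u_quadratic] ..
  ultimately show ?thesis by (simp add: s_def)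
qed
end
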